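(* Let $A\in\mathbb{C}^{n\times n}$ be Hermitian, $f(x)=\frac12\|xx^*-A\|_F^2$ with $\nabla f(x)=2(xx^*-A)x$, and $0<c_1<c_2<1/2$. Consider the Fletcher–Reeves conjugate gradient iteration: $x_0\in\mathbb{C}^{n\times p}_*$, $\eta_0=-\nabla f(x_0)$, $x_{k+1}=x_k+\alpha_k\eta_k$, $\eta_{k+1}=-\nabla f(x_{k+1})+\beta_{k+1}\eta_k$ with $\beta_{k+1}=\|\nabla f(x_{k+1})\|_F^2/\|\nabla f(x_k)\|_F^2$, where every $\alpha_k>0$ satisfies the strong Wolfe conditions $$f(x_k+\alpha_k\eta_k)\le f(x_k)+c_1\alpha_k\langle\nabla f(x_k),\eta_k\rangle,\qquad |\langle\nabla f(x_k+\alpha_k\eta_k),\eta_k\rangle|\le c_2|\langle\nabla f(x_k),\eta_k\rangle|,$$ and all iterates lie in $\mathbb{C}^{n\times p}_*$. If $\nabla f(x_k)\ne0$ for all $k$, then $$\liminf_{k\to\infty}\|\nabla f(x_k)\|_F=0.$$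
   Context: $\mathbb{C}^{n\times p}_*=\{X\in\mathbb{C}^{n\times p}:\operatorname{rank}X=p\}$; $\mathbb{C}^{n\times p}$ is a real vector space with inner product $\langle U,V\rangle=\Re\operatorname{tr}(U^*V)$ and induced norm $\|\cdot\|_F$. (The paper states this for the equivalent Riemannian Fletcher–Reeves CG on the quotient manifold $\mathbb{C}^{n\times p}_*/\mathcal O_p$ with metric $\Re\operatorname{tr}(U^*V)$, retraction $x\mapsto x+\tau\eta$, and differentiated-retraction vector transport; in horizontal-lift coordinates it is the iteration above.) *)

theory Defs
  imports "HOL-Analysis.Analysis"
begin

definition cadj :: "complex^'p^'n \<Rightarrow> complex^'n^'p" where
  "cadj X = (\<chi> i j. cnj (X $ j $ i))"

definition frob_inner :: "complex^'p^'n \<Rightarrow> complex^'p^'n \<Rightarrow> real" where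
  "frob_inner U V = Re (\<Sum>i\<in>UNIV. \<Sum>j\<in>UNIV. cnj (U $ i $ j) * V $ i $ j)"

definition frob_norm :: "complex^'p^'n \<Rightarrow> real" where
  "frob_norm U = sqrt (frob_inner U U)"

definition cost :: "complex^'n^'n \<Rightarrow> complex^'p^'n \<Rightarrow> real" where
  "cost A X = (1/2) * (frob_norm (X ** cadj X - A))\<^sup>2"

definition grad :: "complex^'n^'n \<Rightarrow> complex^'p^'n \<Rightarrow> complex^'p^'n" where
  "grad A X = 2 *\<^sub>R ((X ** cadj X - A) ** X)"

end

theory Submission
  imports Defs
begin

text \<open>
  Al-Baali's argument. Write \<open>g\<^sub>k\<close> for the gradient at \<open>x\<^sub>k\<close>. Because \<open>c\<^sub>2 < 1/2\<close>,
  an induction along the Fletcher--Reeves recursion shows that every \<open>\<eta>\<^sub>k\<close> is a descent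
  direction with \<open>-\<langle>g\<^sub>k, \<eta>\<^sub>k\<rangle>\<close> comparable to \<open>\<parallel>g\<^sub>k\<parallel>\<^sup>2\<close>. Hence the iterates stay in the
  sublevel set \<open>{f \<le> f(x\<^sub>0)}\<close>, which is bounded since \<open>\<parallel>x\<parallel>\<^sup>2 = Re tr(x x\<^sup>*)\<close> is controlled
  by \<open>\<parallel>x x\<^sup>* - A\<parallel>\<close>; there the cubic gradient is Lipschitz, and the two Wolfe conditions give
  Zoutendijk's condition \<open>\<Sum>\<^sub>k \<langle>g\<^sub>k, \<eta>\<^sub>k\<rangle>\<^sup>2 / \<parallel>\<eta>\<^sub>k\<parallel>\<^sup>2 < \<infinity>\<close>. On the other hand the recursion
  yields \<open>\<parallel>\<eta>\<^sub>k\<parallel>\<^sup>2 / \<parallel>g\<^sub>k\<parallel>\<^sup>4 \<le> C \<Sum>\<^bsub>j \<le> k\<^esub> \<parallel>g\<^sub>j\<parallel>\<^sup>-\<^sup>2\<close>, so gradients bounded away from zero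
  would make the Zoutendijk terms dominate a multiple of the harmonic series.
\<close>

lemma uniform_lower_bound_if_liminf_pos:
  fixes X :: "nat \<Rightarrow> real"
  assumes pos: "\<And>k. 0 < X k" and liminf_pos: "0 < liminf (\<lambda>k. ereal (X k))"
  obtains \<Gamma> where "0 < \<Gamma>" "\<And>k. \<Gamma> \<le> X k"
proof -
  obtain e where e0: "0 < ereal e" and e: "ereal e < liminf (\<lambda>k. ereal (X k))"
    using ereal_dense2[OF liminf_pos] by blast
  then obtain N where N: "\<And>k. N \<le> k \<Longrightarrow> e < X k"
    using less_LiminfD[OF e] by (auto simp: eventually_sequentially)
  define \<Gamma> where "\<Gamma> = Min (insert e (X ` {..<N}))"
  show thesis
  proof
    show "0 < \<Gamma>"
      using e0 pos by (simp add: \<Gamma>_def)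
    show "\<Gamma> \<le> X k" for k
    proof (cases "k < N")
      case True
      then show ?thesis by (simp add: \<Gamma>_def)
    next
      case False
      then have "\<Gamma> \<le> e" "e < X k"
        using N by (simp_all add: \<Gamma>_def)
      then show ?thesis by simp
    qed
  qed
qed

lemma not_summable_if_ge_harmonic:
  fixes z :: "nat \<Rightarrow> real"
  assumes D: "0 < D" and z: "\<And>k. D / (real k + 1) \<le> z k"
  shows "\<not> summable z"
proof
  assume "summable z"
  then have "summable (\<lambda>k. z k / D)" by (rule summable_divide)
  then have "summable (\<lambda>k. inverse (real (Suc k)))"
    by (rule summable_comparison_test') (use z D in \<open>simp add: field_simps\<close>)
  then have "summable (\<lambda>k. inverse (real k))"
    using summable_Suc_iff[of "\<lambda>k. inverse (real k)"] by simp
  then show False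
    using not_summable_harmonic[where 'a = real] by simp
qed

section \<open>Fletcher--Reeves iterations with strong Wolfe steps\<close>

text \<open>Only the sequences of cost values, gradients, directions and step sizes enter the argument.\<close>

locale fletcher_reeves_wolfe =
  fixes f :: "nat \<Rightarrow> real" and g eta :: "nat \<Rightarrow> 'a::real_inner"
    and alpha :: "nat \<Rightarrow> real" and c1 c2 :: real
  assumes c1_pos: "0 < c1" and c2_nonneg: "0 \<le> c2" and c2_less_half: "c2 < 1/2"
    and eta_0: "eta 0 = - g 0"
    and eta_Suc: "\<And>k. eta (Suc k) = - g (Suc k)
      + ((norm (g (Suc k)))\<^sup>2 / (norm (g k))\<^sup>2) *\<^sub>R eta k"
    and alpha_pos: "\<And>k. 0 < alpha k"
    and sufficient_decrease: "\<And>k. f (Suc k) \<le> f k + c1 * alpha k * inner (g k) (eta k)"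
    and curvature: "\<And>k. \<bar>inner (g (Suc k)) (eta k)\<bar> \<le> c2 * \<bar>inner (g k) (eta k)\<bar>"
    and g_nonzero: "\<And>k. g k \<noteq> 0"
begin

definition beta :: "nat \<Rightarrow> real" where
  "beta k = (norm (g (Suc k)))\<^sup>2 / (norm (g k))\<^sup>2"

lemma beta_nonneg: "0 \<le> beta k"
  by (simp add: beta_def)

lemma eta_Suc_beta: "eta (Suc k) = - g (Suc k) + beta k *\<^sub>R eta k"
  by (simp add: eta_Suc beta_def)

lemma inner_g_eta_Suc:
  "inner (g (Suc k)) (eta (Suc k)) = - (norm (g (Suc k)))\<^sup>2 + beta k * inner (g (Suc k)) (eta k)"
  by (simp add: eta_Suc_beta inner_diff_right power2_norm_eq_inner)

lemma power2_norm_eta_Suc: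
  "(norm (eta (Suc k)))\<^sup>2 = (norm (g (Suc k)))\<^sup>2 - 2 * (beta k * inner (g (Suc k)) (eta k))
     + (beta k)\<^sup>2 * (norm (eta k))\<^sup>2"
  unfolding eta_Suc_beta power2_norm_eq_inner
  by (simp add: inner_add_left inner_add_right inner_commute power2_eq_square algebra_simps)

lemma curvature_scaled:
  assumes "(1 - c2) * \<bar>inner (g k) (eta k)\<bar> \<le> (norm (g k))\<^sup>2"
  shows "(1 - c2) * \<bar>beta k * inner (g (Suc k)) (eta k)\<bar> \<le> c2 * (norm (g (Suc k)))\<^sup>2"
proof -
  have "(1 - c2) * \<bar>inner (g (Suc k)) (eta k)\<bar> \<le> c2 * ((1 - c2) * \<bar>inner (g k) (eta k)\<bar>)"
    using mult_left_mono[OF curvature[of k], of "1 - c2"] c2_less_half by (simp add: mult_ac)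
  also have "\<dots> \<le> c2 * (norm (g k))\<^sup>2"
    using assms c2_nonneg by (rule mult_left_mono)
  finally have "beta k * ((1 - c2) * \<bar>inner (g (Suc k)) (eta k)\<bar>) \<le> beta k * (c2 * (norm (g k))\<^sup>2)"
    using beta_nonneg by (rule mult_left_mono)
  then show ?thesis
    using g_nonzero[of k] by (simp add: beta_def abs_mult field_simps)
qed

text \<open>This is where \<open>c2 < 1/2\<close> is needed.\<close>

lemma descent_bounds:
  "(1 - c2) * \<bar>inner (g k) (eta k)\<bar> \<le> (norm (g k))\<^sup>2
   \<and> (1 - c2) * inner (g k) (eta k) \<le> - (1 - 2 * c2) * (norm (g k))\<^sup>2"
proof (induction k)
  case 0
  have "inner (g 0) (eta 0) = - (norm (g 0))\<^sup>2"
    by (simp add: eta_0 power2_norm_eq_inner)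
  then show ?case
    using c2_nonneg c2_less_half mult_right_mono[OF _ zero_le_power2[of "norm (g 0)"], of c2 "2 * c2"]
    by (auto simp: algebra_simps)
next
  case (Suc k)
  define G where "G = (norm (g (Suc k)))\<^sup>2"
  define b where "b = beta k * inner (g (Suc k)) (eta k)"
  have "(1 - c2) * \<bar>b\<bar> \<le> c2 * G"
    unfolding b_def G_def using Suc by (intro curvature_scaled) simp
  then have b: "(1 - c2) * b \<le> c2 * G" "- ((1 - c2) * b) \<le> c2 * G"
    using mult_left_mono[OF abs_ge_self[of b], of "1 - c2"]
      mult_left_mono[OF abs_ge_minus_self[of b], of "1 - c2"] c2_less_half by linarith+
  have G: "c2 * G \<le> G"
    using c2_less_half mult_right_mono[of c2 1 G] by (simp add: G_def)
  have s: "(1 - c2) * inner (g (Suc k)) (eta (Suc k)) = - G + c2 * G + (1 - c2) * b"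
    by (simp add: inner_g_eta_Suc G_def b_def algebra_simps)
  have "(1 - c2) * \<bar>inner (g (Suc k)) (eta (Suc k))\<bar> = \<bar>(1 - c2) * inner (g (Suc k)) (eta (Suc k))\<bar>"
    using c2_less_half by (simp add: abs_mult)
  also have "\<dots> \<le> G"
    unfolding s abs_le_iff using b G by linarith
  moreover have "(1 - c2) * inner (g (Suc k)) (eta (Suc k)) \<le> - (1 - 2 * c2) * G"
    unfolding s using b by (simp add: algebra_simps)
  ultimately show ?case
    by (simp add: G_def)
qed

lemma inner_g_eta_neg: "inner (g k) (eta k) < 0"
proof -
  have "0 < (1 - 2 * c2) * (norm (g k))\<^sup>2"
    using g_nonzero[of k] c2_less_half by simp
  then have "(1 - c2) * inner (g k) (eta k) < 0"
    using descent_bounds[of k] by linarith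
  then show ?thesis
    using c2_less_half by (simp add: mult_less_0_iff)
qed

lemma eta_nonzero: "eta k \<noteq> 0"
  using inner_g_eta_neg[of k] by auto

lemma decseq_f: "decseq f"
proof (rule decseq_SucI)
  show "f (Suc k) \<le> f k" for k
    using sufficient_decrease[of k]
      mult_pos_neg[OF mult_pos_pos[OF c1_pos alpha_pos[of k]] inner_g_eta_neg[of k]]
    by linarith
qed

lemma zoutendijk:
  assumes lipschitz: "\<And>k. norm (g (Suc k) - g k) \<le> L * (alpha k * norm (eta k))"
    and bounded_below: "\<And>k. b \<le> f k"
  shows "summable (\<lambda>k. (inner (g k) (eta k))\<^sup>2 / (norm (eta k))\<^sup>2)"
proof -
  define K where "K = L / (c1 * (1 - c2))"
  have "0 \<le> L * (alpha 0 * norm (eta 0))"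
    using lipschitz[of 0] norm_ge_zero order_trans by blast
  moreover have "0 < alpha 0 * norm (eta 0)"
    using alpha_pos[of 0] eta_nonzero[of 0] by simp
  ultimately have "0 \<le> L"
    by (simp add: zero_le_mult_iff)
  then have "0 \<le> K"
    using c1_pos c2_less_half by (simp add: K_def)
  have term_le: "(inner (g k) (eta k))\<^sup>2 / (norm (eta k))\<^sup>2 \<le> K * (f k - f (Suc k))" for k
  proof -
    let ?s = "inner (g k) (eta k)"
    have s: "?s < 0" by (rule inner_g_eta_neg)
    have "(1 - c2) * \<bar>?s\<bar> \<le> inner (g (Suc k) - g k) (eta k)"
      using curvature[of k] s by (simp add: inner_diff_left algebra_simps)
    also have "\<dots> \<le> norm (g (Suc k) - g k) * norm (eta k)"
      by (rule norm_cauchy_schwarz)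
    also have "\<dots> \<le> L * alpha k * (norm (eta k))\<^sup>2"
      using mult_right_mono[OF lipschitz[of k] norm_ge_zero[of "eta k"]]
      by (simp add: power2_eq_square mult_ac)
    finally have "\<bar>?s\<bar> / (norm (eta k))\<^sup>2 \<le> L * alpha k / (1 - c2)"
      using eta_nonzero[of k] c2_less_half by (simp add: field_simps)
    then have "\<bar>?s\<bar> * (\<bar>?s\<bar> / (norm (eta k))\<^sup>2) \<le> \<bar>?s\<bar> * (L * alpha k / (1 - c2))"
      by (rule mult_left_mono) simp
    also have "\<dots> = K * (c1 * alpha k * - ?s)"
      using s c1_pos c2_less_half by (simp add: K_def field_simps)
    also have "\<dots> \<le> K * (f k - f (Suc k))"
      using sufficient_decrease[of k] \<open>0 \<le> K\<close> by (intro mult_left_mono) auto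
    finally show ?thesis
      by (simp add: power2_eq_square)
  qed
  show ?thesis
  proof (rule summableI_nonneg_bounded)
    show "(\<Sum>k<n. (inner (g k) (eta k))\<^sup>2 / (norm (eta k))\<^sup>2) \<le> K * (f 0 - b)" for n
    proof -
      have "(\<Sum>k<n. (inner (g k) (eta k))\<^sup>2 / (norm (eta k))\<^sup>2) \<le> (\<Sum>k<n. K * (f k - f (Suc k)))"
        by (intro sum_mono term_le)
      also have "\<dots> = K * (f 0 - f n)"
        by (simp only: sum_distrib_left[symmetric] sum_lessThan_telescope')
      also have "\<dots> \<le> K * (f 0 - b)"
        using bounded_below[of n] \<open>0 \<le> K\<close> by (intro mult_left_mono) auto
      finally show ?thesis .
    qed
  qed simp
qed

lemma power2_norm_eta_le:
  "(norm (eta k))\<^sup>2 / ((norm (g k))\<^sup>2)\<^sup>2 \<le> (1 + c2) / (1 - c2) * (\<Sum>j\<le>k. 1 / (norm (g j))\<^sup>2)"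
proof (induction k)
  case 0
  have "(norm (eta 0))\<^sup>2 / ((norm (g 0))\<^sup>2)\<^sup>2 = 1 * (1 / (norm (g 0))\<^sup>2)"
    using g_nonzero[of 0] by (simp add: eta_0 power2_eq_square)
  also have "\<dots> \<le> (1 + c2) / (1 - c2) * (1 / (norm (g 0))\<^sup>2)"
    using c2_nonneg c2_less_half by (intro mult_right_mono) simp_all
  finally show ?case
    by simp
next
  case (Suc k)
  define C where "C = (1 + c2) / (1 - c2)"
  define G where "G = (norm (g (Suc k)))\<^sup>2"
  have "0 < G" "0 < (norm (g k))\<^sup>2"
    using g_nonzero by (simp_all add: G_def)
  define b where "b = beta k * inner (g (Suc k)) (eta k)"
  have "(1 - c2) * \<bar>b\<bar> \<le> c2 * G"
    unfolding G_def b_def using descent_bounds[of k] by (intro curvature_scaled) simp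
  then have "- ((1 - c2) * b) \<le> c2 * G"
    using mult_left_mono[OF abs_ge_minus_self[of b], of "1 - c2"] c2_less_half by linarith
  then have "- b \<le> c2 / (1 - c2) * G"
    using c2_less_half by (simp add: field_simps)
  moreover have "C * G = G + 2 * (c2 / (1 - c2) * G)"
    using c2_less_half by (simp add: C_def field_simps)
  ultimately have "(norm (eta (Suc k)))\<^sup>2 \<le> C * G + (beta k)\<^sup>2 * (norm (eta k))\<^sup>2"
    unfolding power2_norm_eta_Suc b_def[symmetric] G_def[symmetric] by linarith
  then have "(norm (eta (Suc k)))\<^sup>2 / G\<^sup>2 \<le> (C * G + (beta k)\<^sup>2 * (norm (eta k))\<^sup>2) / G\<^sup>2"
    by (rule divide_right_mono) simp
  also have "\<dots> = C / G + (norm (eta k))\<^sup>2 / ((norm (g k))\<^sup>2)\<^sup>2"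
    using \<open>0 < G\<close> \<open>0 < (norm (g k))\<^sup>2\<close> unfolding beta_def G_def[symmetric]
    by (simp add: power2_eq_square field_simps)
  also have "\<dots> \<le> C / G + C * (\<Sum>j\<le>k. 1 / (norm (g j))\<^sup>2)"
    using Suc.IH by (simp add: C_def)
  finally show ?case
    by (simp add: C_def G_def algebra_simps)
qed

lemma zoutendijk_terms_ge_harmonic:
  assumes "0 < \<Gamma>" and \<Gamma>: "\<And>j. \<Gamma> \<le> norm (g j)"
  shows "((1 - 2 * c2) / (1 - c2))\<^sup>2 * \<Gamma>\<^sup>2 / ((1 + c2) / (1 - c2)) / (real k + 1)
    \<le> (inner (g k) (eta k))\<^sup>2 / (norm (eta k))\<^sup>2"
proof -
  define H where "H = (norm (g k))\<^sup>2"
  define B where "B = (1 + c2) / (1 - c2) * ((real k + 1) / \<Gamma>\<^sup>2)"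
  define \<delta> where "\<delta> = (1 - 2 * c2) / (1 - c2)"
  have "0 < H" "0 < \<delta>" "0 < (norm (eta k))\<^sup>2"
    using g_nonzero eta_nonzero c2_less_half by (simp_all add: H_def \<delta>_def)
  have "(\<Sum>j\<le>k. 1 / (norm (g j))\<^sup>2) \<le> (\<Sum>j\<le>k. 1 / \<Gamma>\<^sup>2)"
    using \<Gamma> \<open>0 < \<Gamma>\<close> g_nonzero by (intro sum_mono divide_left_mono power_mono) auto
  also have "\<dots> = (real k + 1) / \<Gamma>\<^sup>2"
    by simp
  finally have "(\<Sum>j\<le>k. 1 / (norm (g j))\<^sup>2) \<le> (real k + 1) / \<Gamma>\<^sup>2" .
  then have "(1 + c2) / (1 - c2) * (\<Sum>j\<le>k. 1 / (norm (g j))\<^sup>2) \<le> B"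
    unfolding B_def by (rule mult_left_mono) (use c2_nonneg c2_less_half in simp)
  then have "(norm (eta k))\<^sup>2 / H\<^sup>2 \<le> B"
    using power2_norm_eta_le[of k] by (simp add: H_def)
  then have eta: "(norm (eta k))\<^sup>2 \<le> B * H\<^sup>2"
    using \<open>0 < H\<close> by (simp add: pos_divide_le_eq)
  have "\<delta> * H \<le> - inner (g k) (eta k)"
    using descent_bounds[of k] c2_less_half by (simp add: H_def \<delta>_def field_simps)
  then have s: "(\<delta> * H)\<^sup>2 \<le> (inner (g k) (eta k))\<^sup>2"
    using \<open>0 < \<delta>\<close> \<open>0 < H\<close> power_mono[of "\<delta> * H" "- inner (g k) (eta k)" 2] by simp
  have "((1 - 2 * c2) / (1 - c2))\<^sup>2 * \<Gamma>\<^sup>2 / ((1 + c2) / (1 - c2)) / (real k + 1) = \<delta>\<^sup>2 / B"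
    by (simp add: B_def \<delta>_def)
  also have "\<dots> = (\<delta> * H)\<^sup>2 / (B * H\<^sup>2)"
    using \<open>0 < H\<close> by (simp add: power_mult_distrib)
  also have "\<dots> \<le> (inner (g k) (eta k))\<^sup>2 / (norm (eta k))\<^sup>2"
    using s eta \<open>0 < (norm (eta k))\<^sup>2\<close> by (intro frac_le) simp_all
  finally show ?thesis .
qed

theorem liminf_norm_g_eq_0:
  assumes lipschitz: "\<And>k. norm (g (Suc k) - g k) \<le> L * (alpha k * norm (eta k))"
    and bounded_below: "\<And>k. b \<le> f k"
  shows "liminf (\<lambda>k. ereal (norm (g k))) = 0"
proof (rule antisym)
  show "0 \<le> liminf (\<lambda>k. ereal (norm (g k)))"
    by (rule Liminf_bounded) simp
  show "liminf (\<lambda>k. ereal (norm (g k))) \<le> 0"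
  proof (rule ccontr)
    assume "\<not> ?thesis"
    then have "0 < liminf (\<lambda>k. ereal (norm (g k)))"
      by simp
    then obtain \<Gamma> where "0 < \<Gamma>" "\<And>k. \<Gamma> \<le> norm (g k)"
      by (rule uniform_lower_bound_if_liminf_pos[rotated]) (use g_nonzero in auto)
    then have "\<not> summable (\<lambda>k. (inner (g k) (eta k))\<^sup>2 / (norm (eta k))\<^sup>2)"
      using c2_nonneg c2_less_half
      by (intro not_summable_if_ge_harmonic[of "((1 - 2 * c2) / (1 - c2))\<^sup>2 * \<Gamma>\<^sup>2 / ((1 + c2) / (1 - c2))"]
          zoutendijk_terms_ge_harmonic) simp_all
    then show False
      using zoutendijk[OF lipschitz bounded_below] by contradiction
  qed
qed

end

section \<open>The cost function on complex matrices\<close>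

lemma frob_inner_eq_inner: "frob_inner U V = inner U V"
  unfolding frob_inner_def inner_vec_def by (simp add: Re_sum inner_complex_def)

lemma frob_norm_eq_norm: "frob_norm U = norm U"
  unfolding frob_norm_def frob_inner_eq_inner by (simp add: norm_eq_sqrt_inner)

lemma power2_norm_matrix_eq_sum:
  "(norm (X :: 'a::real_normed_vector^'m^'n))\<^sup>2 = (\<Sum>i\<in>UNIV. \<Sum>j\<in>UNIV. (norm (X$i$j))\<^sup>2)"
  by (simp add: norm_vec_def L2_set_def sum_nonneg)

lemma norm_cadj [simp]: "norm (cadj X) = norm X"
proof -
  have "(norm (cadj X))\<^sup>2 = (norm X)\<^sup>2"
    unfolding power2_norm_matrix_eq_sum cadj_def by (simp, subst sum.swap, simp)
  then show ?thesis by (simp add: power2_eq_iff_nonneg)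
qed

lemma cadj_diff: "cadj (X - Y) = cadj X - cadj Y"
  unfolding cadj_def by (simp add: vec_eq_iff)

lemma norm_matrix_mult_le:
  fixes X :: "'a::real_normed_field^'m^'n" and Y :: "'a^'p^'m"
  shows "norm (X ** Y) \<le> norm X * norm Y"
proof -
  have entry: "(norm (\<Sum>k\<in>UNIV. X$i$k * Y$k$j))\<^sup>2
      \<le> (\<Sum>k\<in>UNIV. (norm (X$i$k))\<^sup>2) * (\<Sum>k\<in>UNIV. (norm (Y$k$j))\<^sup>2)" for i j
  proof -
    have "norm (\<Sum>k\<in>UNIV. X$i$k * Y$k$j) \<le> (\<Sum>k\<in>UNIV. norm (X$i$k) * norm (Y$k$j))"
      using norm_sum[of "\<lambda>k. X$i$k * Y$k$j" UNIV] by (simp add: norm_mult)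
    then have "(norm (\<Sum>k\<in>UNIV. X$i$k * Y$k$j))\<^sup>2 \<le> (\<Sum>k\<in>UNIV. norm (X$i$k) * norm (Y$k$j))\<^sup>2"
      by (simp add: power_mono)
    also have "\<dots> \<le> (\<Sum>k\<in>UNIV. (norm (X$i$k))\<^sup>2) * (\<Sum>k\<in>UNIV. (norm (Y$k$j))\<^sup>2)"
      by (rule Cauchy_Schwarz_ineq_sum)
    finally show ?thesis .
  qed
  have "(norm (X ** Y))\<^sup>2 = (\<Sum>i\<in>UNIV. \<Sum>j\<in>UNIV. (norm (\<Sum>k\<in>UNIV. X$i$k * Y$k$j))\<^sup>2)"
    unfolding power2_norm_matrix_eq_sum by (simp add: matrix_matrix_mult_def)
  also have "\<dots> \<le> (\<Sum>i\<in>UNIV. \<Sum>j\<in>UNIV. (\<Sum>k\<in>UNIV. (norm (X$i$k))\<^sup>2) * (\<Sum>k\<in>UNIV. (norm (Y$k$j))\<^sup>2))"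
    by (intro sum_mono entry)
  also have "\<dots> = (\<Sum>i\<in>UNIV. \<Sum>k\<in>UNIV. (norm (X$i$k))\<^sup>2) * (\<Sum>j\<in>UNIV. \<Sum>k\<in>UNIV. (norm (Y$k$j))\<^sup>2)"
    by (rule sum_product[symmetric])
  also have "(\<Sum>j\<in>UNIV. \<Sum>k\<in>UNIV. (norm (Y$k$j))\<^sup>2) = (norm Y)\<^sup>2"
    unfolding power2_norm_matrix_eq_sum by (rule sum.swap)
  finally have "(norm (X ** Y))\<^sup>2 \<le> (norm X * norm Y)\<^sup>2"
    by (simp add: power2_norm_matrix_eq_sum power_mult_distrib)
  then show ?thesis by (rule power2_le_imp_le) simp
qed

lemma norm_matrix_mult3_le:
  fixes X :: "'a::real_normed_field^'m^'n" and Y :: "'a^'p^'m" and Z :: "'a^'q^'p"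
  shows "norm (X ** (Y ** Z)) \<le> norm X * norm Y * norm Z"
  using order_trans[OF norm_matrix_mult_le mult_left_mono[OF norm_matrix_mult_le norm_ge_zero]]
  by (simp add: mult.assoc)

lemma matrix_diff_ldistrib: "(A::'a::ring_1^'m^'n) ** (B - C) = A ** B - A ** C"
  by (vector matrix_matrix_mult_def sum_subtractf right_diff_distrib)

lemma matrix_diff_rdistrib: "((B::'a::ring_1^'m^'n) - C) ** A = B ** A - C ** A"
  by (vector matrix_matrix_mult_def sum_subtractf left_diff_distrib)

lemma grad_diff_eq:
  "grad A x - grad A y = 2 *\<^sub>R (x ** (cadj x ** (x - y)) + x ** (cadj (x - y) ** y)
     + (x - y) ** (cadj y ** y) - A ** (x - y))"
proof -
  have "(x ** cadj x - A) ** x - (y ** cadj y - A) ** y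
      = x ** (cadj x ** (x - y)) + x ** (cadj (x - y) ** y) + (x - y) ** (cadj y ** y) - A ** (x - y)"
    by (simp only: cadj_diff matrix_diff_ldistrib matrix_diff_rdistrib matrix_mul_assoc) simp
  then show ?thesis by (simp add: grad_def flip: scaleR_diff_right)
qed

lemma norm_grad_diff_le:
  assumes "norm x \<le> R" "norm y \<le> R"
  shows "norm (grad A x - grad A y) \<le> 2 * (3 * R\<^sup>2 + norm A) * norm (x - y)"
proof -
  let ?d = "norm (x - y)"
  have "norm x * norm x \<le> R\<^sup>2" "norm x * norm y \<le> R\<^sup>2" "norm y * norm y \<le> R\<^sup>2"
    using assms by (auto simp: power2_eq_square intro!: mult_mono order_trans[OF norm_ge_zero])
  then have R: "norm x * norm x * ?d \<le> R\<^sup>2 * ?d" "norm x * norm y * ?d \<le> R\<^sup>2 * ?d"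
      "norm y * norm y * ?d \<le> R\<^sup>2 * ?d"
    by (auto intro: mult_right_mono)
  have "norm (x ** (cadj x ** (x - y))) \<le> norm x * norm x * ?d"
    using norm_matrix_mult3_le[of x "cadj x" "x - y"] by simp
  moreover have "norm (x ** (cadj (x - y) ** y)) \<le> norm x * norm y * ?d"
    using norm_matrix_mult3_le[of x "cadj (x - y)" y] by (simp add: mult_ac)
  moreover have "norm ((x - y) ** (cadj y ** y)) \<le> norm y * norm y * ?d"
    using norm_matrix_mult3_le[of "x - y" "cadj y" y] by (simp add: mult_ac)
  moreover have "norm (A ** (x - y)) \<le> norm A * ?d"
    by (rule norm_matrix_mult_le)
  moreover have "(3 * R\<^sup>2 + norm A) * ?d = 3 * (R\<^sup>2 * ?d) + norm A * ?d"
    by (simp add: algebra_simps)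
  ultimately have "norm (x ** (cadj x ** (x - y)) + x ** (cadj (x - y) ** y)
      + (x - y) ** (cadj y ** y) - A ** (x - y)) \<le> (3 * R\<^sup>2 + norm A) * ?d"
    using R norm_triangle_ineq4[of "x ** (cadj x ** (x - y)) + x ** (cadj (x - y) ** y)
        + (x - y) ** (cadj y ** y)" "A ** (x - y)"]
      norm_triangle_ineq[of "x ** (cadj x ** (x - y)) + x ** (cadj (x - y) ** y)"
        "(x - y) ** (cadj y ** y)"]
      norm_triangle_ineq[of "x ** (cadj x ** (x - y))" "x ** (cadj (x - y) ** y)"]
    by linarith
  then have "2 * norm (x ** (cadj x ** (x - y)) + x ** (cadj (x - y) ** y)
      + (x - y) ** (cadj y ** y) - A ** (x - y)) \<le> 2 * ((3 * R\<^sup>2 + norm A) * ?d)"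
    by simp
  then show ?thesis
    unfolding grad_diff_eq norm_scaleR by (simp only: abs_numeral mult.assoc)
qed

lemma power2_norm_eq_inner_mat1: "(norm (x::complex^'p^'n))\<^sup>2 = inner (mat 1) (x ** cadj x)"
proof -
  have "inner (mat 1) M = (\<Sum>i\<in>UNIV. Re (M$i$i))" for M :: "complex^'n^'n"
  proof -
    have "inner ((mat 1 :: complex^'n^'n)$i$j) (M$i$j) = (if i = j then Re (M$i$i) else 0)" for i j
      by (auto simp: mat_def inner_complex_def)
    then show ?thesis by (simp add: inner_vec_def)
  qed
  then show ?thesis
    by (simp add: power2_norm_matrix_eq_sum matrix_matrix_mult_def cadj_def Re_sum
        complex_mult_cnj cmod_power2)
qed

lemma norm_le_if_cost_le:
  fixes A :: "complex^'n^'n" and x :: "complex^'p^'n"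
  assumes "cost A x \<le> F"
  shows "norm x \<le> sqrt (norm (mat 1 :: complex^'n^'n) * (sqrt (2 * F) + norm A))"
proof -
  have "norm (x ** cadj x - A) \<le> sqrt (2 * F)"
    using assms real_sqrt_le_mono[of "(norm (x ** cadj x - A))\<^sup>2" "2 * F"]
    by (simp add: cost_def frob_norm_eq_norm)
  then have gram: "norm (x ** cadj x) \<le> sqrt (2 * F) + norm A"
    using norm_triangle_sub[of "x ** cadj x" A] by simp
  have "(norm x)\<^sup>2 \<le> norm (mat 1 :: complex^'n^'n) * norm (x ** cadj x)"
    unfolding power2_norm_eq_inner_mat1 by (rule norm_cauchy_schwarz)
  also have "\<dots> \<le> norm (mat 1 :: complex^'n^'n) * (sqrt (2 * F) + norm A)"
    using gram by (rule mult_left_mono) simp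
  finally have "(norm x)\<^sup>2 \<le> norm (mat 1 :: complex^'n^'n) * (sqrt (2 * F) + norm A)" .
  then show ?thesis by (rule real_le_rsqrt)
qed

theorem theorem4p5:
  fixes A :: "complex^'n^'n"
    and x eta :: "nat \<Rightarrow> complex^'p^'n"
    and alpha :: "nat \<Rightarrow> real"
    and c1 c2 :: real
  assumes herm: "cadj A = A"
    and c: "0 < c1" "c1 < c2" "c2 < 1/2"
    and eta0: "eta 0 = - grad A (x 0)"
    and xstep: "\<And>k. x (Suc k) = x k + alpha k *\<^sub>R eta k"
    and etastep: "\<And>k. eta (Suc k) = - grad A (x (Suc k))
        + ((frob_norm (grad A (x (Suc k))))\<^sup>2 / (frob_norm (grad A (x k)))\<^sup>2) *\<^sub>R eta k"
    and alpha_pos: "\<And>k. 0 < alpha k"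
    and wolfe1: "\<And>k. cost A (x k + alpha k *\<^sub>R eta k)
        \<le> cost A (x k) + c1 * alpha k * frob_inner (grad A (x k)) (eta k)"
    and wolfe2: "\<And>k. \<bar>frob_inner (grad A (x k + alpha k *\<^sub>R eta k)) (eta k)\<bar>
        \<le> c2 * \<bar>frob_inner (grad A (x k)) (eta k)\<bar>"
    and fullrank: "\<And>k. rank (x k) = CARD('p)"
    and nonstat: "\<And>k. grad A (x k) \<noteq> 0"
  shows "liminf (\<lambda>k. ereal (frob_norm (grad A (x k)))) = 0"
proof -
  have x_Suc: "x k + alpha k *\<^sub>R eta k = x (Suc k)" for k
    by (simp add: xstep)
  interpret fletcher_reeves_wolfe "\<lambda>k. cost A (x k)" "\<lambda>k. grad A (x k)" eta alpha c1 c2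
    by unfold_locales
      (use c eta0 etastep alpha_pos wolfe1 wolfe2 nonstat in
        \<open>simp_all add: x_Suc frob_inner_eq_inner frob_norm_eq_norm\<close>)
  define R where "R = sqrt (norm (mat 1 :: complex^'n^'n) * (sqrt (2 * cost A (x 0)) + norm A))"
  have x_bounded: "norm (x k) \<le> R" for k
    unfolding R_def using decseqD[OF decseq_f, of 0 k] by (intro norm_le_if_cost_le) simp
  have "norm (grad A (x (Suc k)) - grad A (x k))
      \<le> 2 * (3 * R\<^sup>2 + norm A) * (alpha k * norm (eta k))" for k
    using norm_grad_diff_le[OF x_bounded x_bounded, of A "Suc k" k] alpha_pos[of k]
    by (simp add: xstep)
  moreover have "0 \<le> cost A (x k)" for k
    by (simp add: cost_def)
  ultimately have "liminf (\<lambda>k. ereal (norm (grad A (x k)))) = 0"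
    by (rule liminf_norm_g_eq_0)
  then show ?thesis
    by (simp add: frob_norm_eq_norm)
qed

end
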